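(* Let $\gamma > 0$. Suppose $G$ is a graph on $n$ vertices such that $d(x) + d(y) \geq (1+2\gamma) n$ for all pairs of distinct non-adjacent vertices $x, y \in V(G)$. Let $d_1 \leq \dots \leq d_n$ be the degree sequence of $G$. Then for all $i < n/2$, $$d_i \geq i + \gamma n \quad \text{or} \quad d_{n-i-\gamma n} \geq n - i.$$
   Context: Floors and ceilings are omitted where they do not affect the argument (e.g. $\gamma n$ is treated as an integer). *)

theory Defs
  imports Complex_Main
begin

definition simple_graph :: "nat \<Rightarrow> (nat \<Rightarrow> nat \<Rightarrow> bool) \<Rightarrow> bool" where
  "simple_graph n E \<longleftrightarrow> (\<forall>x y. E x y \<longrightarrow> x < n \<and> y < n) \<and>
     (\<forall>x y. E x y \<longrightarrow> E y x) \<and> (\<forall>x. \<not> E x x)"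

definition degree :: "nat \<Rightarrow> (nat \<Rightarrow> nat \<Rightarrow> bool) \<Rightarrow> nat \<Rightarrow> nat" where
  "degree n E x = card {y. y < n \<and> E x y}"

text \<open>Degree sequence d_1 \<le> ... \<le> d_n, indexed from 1.\<close>
definition deg_seq :: "nat \<Rightarrow> (nat \<Rightarrow> nat \<Rightarrow> bool) \<Rightarrow> nat \<Rightarrow> nat" where
  "deg_seq n E j = sort (map (degree n E) [0..<n]) ! (j - 1)"

end

theory Submission
  imports Defs
begin

text \<open>In fact the first alternative always holds. Since \<open>i < n/2\<close>, two vertices of degree
  \<open>< i + \<gamma>n\<close> have degree sum \<open>< (1+2\<gamma>)n\<close> and must be adjacent, so if \<open>d\<^sub>i < i + \<gamma>n\<close> there is
  a clique \<open>X\<close> of \<open>i\<close> such vertices. Each of them, having \<open>i - 1\<close> neighbours inside \<open>X\<close>, misses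
  at least \<open>n - i - \<gamma>n\<close> vertices outside \<open>X\<close>; conversely a vertex \<open>w \<notin> X\<close> missed by some
  \<open>r \<in> X\<close> has degree \<open>> n + \<gamma>n - i\<close>, so it misses at most \<open>i - \<gamma>n - 2\<close> vertices of \<open>X\<close>.
  Counting the non-edges between \<open>X\<close> and its complement both ways gives
  \<open>i(n - i - \<gamma>n) \<le> (n - i)(i - \<gamma>n - 2)\<close>, which is false for \<open>i < n/2\<close>.\<close>

lemma sum_card_filter_swap:
  assumes "finite A" "finite B"
  shows "(\<Sum>a\<in>A. card {b \<in> B. R a b}) = (\<Sum>b\<in>B. card {a \<in> A. R a b})"
proof -
  have card_as_sum: "card {x \<in> S. P x} = (\<Sum>x\<in>S. if P x then 1 else 0)" if "finite S"
    for S :: "'c set" and P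
    using sum.inter_filter[OF that, of "\<lambda>_. 1::nat" P] by simp
  show ?thesis
    using assms by (simp add: card_as_sum sum.swap[of _ A B])
qed

lemma card_less_nth_le_length_filter:
  assumes "sorted xs" "i < length xs" "xs ! i < t"
  shows "Suc i \<le> length (filter (\<lambda>x. x < t) xs)"
proof -
  have "{..i} \<subseteq> {k. k < length xs \<and> xs ! k < t}"
    using assms sorted_nth_mono[OF assms(1)] by (auto intro: le_less_trans)
  then have "card {..i} \<le> card {k. k < length xs \<and> xs ! k < t}"
    by (intro card_mono) auto
  then show ?thesis by (simp add: length_filter_conv_card)
qed

lemma length_filter_sort: "length (filter P (sort xs)) = length (filter P xs)"
  by (simp only: filter_sort length_sort)

lemma deg_seq_less_imp_card_low_degree:
  assumes "1 \<le> i" "i \<le> n" "deg_seq n E i < t"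
  shows "i \<le> card {v. v < n \<and> degree n E v < t}"
proof -
  have "i \<le> length (filter (\<lambda>d. d < t) (sort (map (degree n E) [0..<n])))"
    using card_less_nth_le_length_filter[of _ "i - 1" t] assms unfolding deg_seq_def by simp
  also have "\<dots> = length (filter (\<lambda>v. degree n E v < t) [0..<n])"
    by (simp add: length_filter_sort filter_map comp_def)
  also have "\<dots> = card {v. v < n \<and> degree n E v < t}"
    by (subst distinct_length_filter) (auto intro: arg_cong[where f = card])
  finally show ?thesis .
qed

lemma nonedge_count_inequality:
  fixes n i g :: nat
  assumes "1 \<le> i" "2 * i < n" "i + g < n"
  shows "(n - i) * (i - (g + 2)) < i * (n - i - g)"
proof (cases "g + 2 \<le> i")
  case True
  have "int ((n - i) * (i - (g + 2))) = (int n - i) * (int i - g - 2)"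
    using True assms by (simp add: of_nat_diff)
  also have "\<dots> = int i * (int n - i - g) - (int g + 2) * (int n - 2 * i) - 2 * i"
    by (simp add: algebra_simps)
  also have "\<dots> < int i * (int n - i - g)"
    using assms mult_nonneg_nonneg[of "int g + 2" "int n - 2 * i"] by linarith
  also have "\<dots> = int (i * (n - i - g))"
    using True assms by (simp add: of_nat_diff)
  finally show ?thesis by linarith
next
  case False
  then show ?thesis using assms by simp
qed

context
  fixes n :: nat and E :: "nat \<Rightarrow> nat \<Rightarrow> bool"
  assumes graph: "simple_graph n E"
begin

lemma degree_plus_card_nonneighbours_le:
  assumes "w < n" "K \<subseteq> {..<n}" "w \<notin> K" "\<And>r. r \<in> K \<Longrightarrow> \<not> E w r"
  shows "degree n E w + card K \<le> n - 1"
proof -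
  have "{y. y < n \<and> E w y} \<subseteq> {..<n} - {w} - K"
    using graph assms unfolding simple_graph_def by auto
  then have "degree n E w \<le> card ({..<n} - {w} - K)"
    unfolding degree_def by (intro card_mono) auto
  also have "\<dots> = n - 1 - card K"
  proof -
    have "K \<subseteq> {..<n} - {w}" using assms(2,3) by blast
    then show ?thesis
      using assms(1) by (simp add: card_Diff_subset finite_subset)
  qed
  finally show ?thesis
    using assms card_mono[of "{..<n} - {w}" K] by fastforce
qed

lemma degree_in_clique:
  assumes "X \<subseteq> {..<n}" "r \<in> X" "\<And>r'. r' \<in> X \<Longrightarrow> r' \<noteq> r \<Longrightarrow> E r r'"
  shows "degree n E r = card X - 1 + card {w \<in> {..<n} - X. E r w}"
proof -
  have fin: "finite X" using assms(1) finite_subset by blast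
  have "{y. y < n \<and> E r y} = (X - {r}) \<union> {w \<in> {..<n} - X. E r w}"
    using graph assms unfolding simple_graph_def by auto
  moreover have "card (X - {r}) = card X - 1"
    using fin assms(2) by simp
  moreover have "card ((X - {r}) \<union> {w \<in> {..<n} - X. E r w})
      = card (X - {r}) + card {w \<in> {..<n} - X. E r w}"
    using fin by (intro card_Un_disjoint) auto
  ultimately show ?thesis
    unfolding degree_def by simp
qed

lemma no_clique_of_low_degree_vertices:
  assumes ore: "\<And>x y. x < n \<Longrightarrow> y < n \<Longrightarrow> x \<noteq> y \<Longrightarrow> \<not> E x y \<Longrightarrow>
           n + 2 * g \<le> degree n E x + degree n E y"
    and X: "X \<subseteq> {..<n}" "card X = i" "\<And>r. r \<in> X \<Longrightarrow> degree n E r < i + g"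
    and i: "1 \<le> i" "2 * i < n" "i + g < n"
  shows False
proof -
  define Y where "Y = {..<n} - X"
  have finX: "finite X" and finY: "finite Y"
    using X(1) finite_subset unfolding Y_def by auto
  have cardY: "card Y = n - i"
    using X finX unfolding Y_def by (simp add: card_Diff_subset)
  have clique: "E r r'" if "r \<in> X" "r' \<in> X" "r' \<noteq> r" for r r'
  proof (rule ccontr)
    assume "\<not> E r r'"
    then have "n + 2 * g \<le> degree n E r + degree n E r'"
      using ore[of r r'] that X(1) by auto
    then show False
      using X(3)[OF that(1)] X(3)[OF that(2)] i(2) by linarith
  qed
  have misses_many: "n - i - g \<le> card {w \<in> Y. \<not> E r w}" if "r \<in> X" for r
  proof -
    have "degree n E r = i - 1 + card {w \<in> Y. E r w}"
      using degree_in_clique[OF X(1) that] clique[OF that] X(2) unfolding Y_def by simp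
    then have "card {w \<in> Y. E r w} \<le> g"
      using X(3)[OF that] i(1) by linarith
    moreover have "{w \<in> Y. \<not> E r w} = Y - {w \<in> Y. E r w}" by blast
    ultimately show ?thesis
      using cardY finY by (simp add: card_Diff_subset)
  qed
  have missed_by_few: "card {r \<in> X. \<not> E r w} \<le> i - (g + 2)" if "w \<in> Y" for w
  proof (cases "\<exists>r \<in> X. \<not> E r w")
    case True
    then obtain r where r: "r \<in> X" "\<not> E r w" by blast
    have w: "w < n" "w \<notin> X" using that unfolding Y_def by auto
    have "n + 2 * g \<le> degree n E r + degree n E w"
      using ore[of r w] r w X(1) by auto
    moreover have "degree n E w + card {r \<in> X. \<not> E r w} \<le> n - 1"
      using graph w X(1) unfolding simple_graph_def
      by (intro degree_plus_card_nonneighbours_le) auto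
    ultimately show ?thesis using X(3)[OF r(1)] by linarith
  next
    case False
    then have "{r \<in> X. \<not> E r w} = {}" by blast
    then show ?thesis by (simp only: card.empty le0)
  qed
  have "i * (n - i - g) \<le> (\<Sum>r\<in>X. card {w \<in> Y. \<not> E r w})"
    using sum_mono[of X "\<lambda>_. n - i - g", OF misses_many] X(2) by simp
  also have "\<dots> = (\<Sum>w\<in>Y. card {r \<in> X. \<not> E r w})"
    by (rule sum_card_filter_swap[OF finX finY])
  also have "\<dots> \<le> (n - i) * (i - (g + 2))"
    using sum_mono[of Y _ "\<lambda>_. i - (g + 2)", OF missed_by_few] cardY by simp
  finally show False
    using nonedge_count_inequality[OF i] by linarith
qed

end

theorem lemma2p2:
  fixes n g :: nat and \<gamma> :: real and E :: "nat \<Rightarrow> nat \<Rightarrow> bool"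
  assumes "simple_graph n E"
    and "\<gamma> > 0" and "\<gamma> < 1/2"
    and "real g = \<gamma> * real n"
    and "\<And>x y. x < n \<Longrightarrow> y < n \<Longrightarrow> x \<noteq> y \<Longrightarrow> \<not> E x y \<Longrightarrow>
           real (degree n E x + degree n E y) \<ge> (1 + 2 * \<gamma>) * real n"
  shows "\<forall>i. 1 \<le> i \<and> real i < real n / 2 \<longrightarrow>
           deg_seq n E i \<ge> i + g \<or> deg_seq n E (n - i - g) \<ge> n - i"
proof (intro allI impI disjI1)
  fix i assume i: "1 \<le> i \<and> real i < real n / 2"
  have ore: "n + 2 * g \<le> degree n E x + degree n E y"
    if "x < n" "y < n" "x \<noteq> y" "\<not> E x y" for x y
    using assms(4) assms(5)[OF that] by (simp add: algebra_simps)
  have "2 * real g = (2 * \<gamma>) * real n"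
    using assms(4) by simp
  also have "\<dots> < 1 * real n"
    using assms(3) i by (intro mult_strict_right_mono) auto
  finally have "i + g < n"
    using i by linarith
  show "i + g \<le> deg_seq n E i"
  proof (rule ccontr)
    assume "\<not> i + g \<le> deg_seq n E i"
    then have "i \<le> card {v. v < n \<and> degree n E v < i + g}"
      using i by (intro deg_seq_less_imp_card_low_degree) auto
    then obtain X where "X \<subseteq> {v. v < n \<and> degree n E v < i + g}" "card X = i"
      by (meson obtain_subset_with_card_n)
    then show False
      using no_clique_of_low_degree_vertices[OF assms(1) ore, of X i] i \<open>i + g < n\<close> by auto
  qed
qed

end
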